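(* Let $\mathfrak{g}_\alpha$, $-1\le\alpha\le1$, be the eight-dimensional real Lie algebras with basis $\{X_1,\dots,X_8\}$ and nonzero brackets $[X_1,X_2]=2X_2$, $[X_1,X_3]=-2X_3$, $[X_2,X_3]=X_1$, $[X_1,X_4]=X_4$, $[X_1,X_5]=-X_5$, $[X_1,X_6]=X_6$, $[X_1,X_7]=-X_7$, $[X_2,X_5]=X_4$, $[X_2,X_7]=X_6$, $[X_3,X_4]=X_5$, $[X_3,X_6]=X_7$, $[X_4,X_8]=X_4$, $[X_5,X_8]=X_5$, $[X_6,X_8]=\alpha X_6$, $[X_7,X_8]=\alpha X_7$. Then every $\mathfrak{g}_\alpha$ ($-1\le\alpha\le 1$) can be obtained as a linear deformation of $\mathfrak{g}_{-1}$. Moreover, no algebra $\mathfrak{g}_\alpha$ with $-1\le\alpha\le1$ contracts nontrivially onto $\mathfrak{g}_{-1}$.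
   Context: A linear deformation of a Lie algebra $\mathfrak{g}$ with bracket $[\cdot,\cdot]$ is a Lie algebra structure on the same vector space of the form $[X,Y]_t=[X,Y]+t\,\varphi(X,Y)$, where $t$ is a scalar and $\varphi$ is a skew-symmetric bilinear map which is a 2-cocycle of $\mathfrak{g}$ with values in the adjoint module and satisfies the integrability condition $\sum_{\sigma\in S_3}\varphi(X_{\sigma(i)},\varphi(X_{\sigma(j)},X_{\sigma(k)}))=0$, so that $[\cdot,\cdot]_t$ satisfies the Jacobi identity. Contraction: given a Lie algebra $\mathfrak{g}$ and invertible linear maps $\Phi_t$, $t\in[1,\infty)$, if $[X,Y]_\infty:=\lim_{t\to\infty}\Phi_t^{-1}[\Phi_t(X),\Phi_t(Y)]$ exists for all $X,Y$, it defines a Lie algebra $\mathfrak{g}'$, a contraction of $\mathfrak{g}$; it is nontrivial if $\mathfrak{g}'\not\cong\mathfrak{g}$. The algebras $\mathfrak{g}_\alpha$, $-1\le\alpha\le1$, are pairwise non-isomorphic. *)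

theory Defs
  imports "HOL-Analysis.Analysis"
begin

text \<open>The underlying real vector space is real^8; the basis vector X_k (k = 1..8)
  is the k-th standard unit vector (index type 8 contains 1,...,7 and 8 = 0).\<close>

definition X :: "nat \<Rightarrow> real^8" where
  "X k = axis (of_nat k) 1"

definition coord :: "nat \<Rightarrow> real^8 \<Rightarrow> real" where
  "coord k v = v $ (of_nat k)"

definition br_upper :: "real \<Rightarrow> nat \<Rightarrow> nat \<Rightarrow> real^8" where
  "br_upper a i j =
     (if (i,j) = (1,2) then 2 *\<^sub>R X 2
      else if (i,j) = (1,3) then (-2) *\<^sub>R X 3
      else if (i,j) = (2,3) then X 1
      else if (i,j) = (1,4) then X 4
      else if (i,j) = (1,5) then - X 5
      else if (i,j) = (1,6) then X 6
      else if (i,j) = (1,7) then - X 7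
      else if (i,j) = (2,5) then X 4
      else if (i,j) = (2,7) then X 6
      else if (i,j) = (3,4) then X 5
      else if (i,j) = (3,6) then X 7
      else if (i,j) = (4,8) then X 4
      else if (i,j) = (5,8) then X 5
      else if (i,j) = (6,8) then a *\<^sub>R X 6
      else if (i,j) = (7,8) then a *\<^sub>R X 7
      else 0)"

definition br_basis :: "real \<Rightarrow> nat \<Rightarrow> nat \<Rightarrow> real^8" where
  "br_basis a i j = (if i < j then br_upper a i j else if j < i then - br_upper a j i else 0)"

definition gbr :: "real \<Rightarrow> real^8 \<Rightarrow> real^8 \<Rightarrow> real^8" where
  "gbr a x y = (\<Sum>i\<in>{1..8}. \<Sum>j\<in>{1..8}. (coord i x * coord j y) *\<^sub>R br_basis a i j)"

definition bilinear_map :: "('v::real_vector \<Rightarrow> 'v \<Rightarrow> 'v) \<Rightarrow> bool" where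
  "bilinear_map b \<longleftrightarrow> (\<forall>x. linear (b x)) \<and> (\<forall>y. linear (\<lambda>x. b x y))"

definition skew :: "('v::real_vector \<Rightarrow> 'v \<Rightarrow> 'v) \<Rightarrow> bool" where
  "skew b \<longleftrightarrow> (\<forall>x y. b x y = - b y x)"

definition jacobi :: "('v::real_vector \<Rightarrow> 'v \<Rightarrow> 'v) \<Rightarrow> bool" where
  "jacobi b \<longleftrightarrow> (\<forall>x y z. b x (b y z) + b y (b z x) + b z (b x y) = 0)"

definition lie_bracket :: "('v::real_vector \<Rightarrow> 'v \<Rightarrow> 'v) \<Rightarrow> bool" where
  "lie_bracket b \<longleftrightarrow> bilinear_map b \<and> skew b \<and> jacobi b"

definition adj_cocycle :: "('v::real_vector \<Rightarrow> 'v \<Rightarrow> 'v) \<Rightarrow> ('v \<Rightarrow> 'v \<Rightarrow> 'v) \<Rightarrow> bool" where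
  "adj_cocycle br phi \<longleftrightarrow> (\<forall>x y z.
      br x (phi y z) - br y (phi x z) + br z (phi x y)
      - phi (br x y) z + phi (br x z) y - phi (br y z) x = 0)"

definition integrable :: "('v::real_vector \<Rightarrow> 'v \<Rightarrow> 'v) \<Rightarrow> bool" where
  "integrable phi \<longleftrightarrow> (\<forall>x y z. phi x (phi y z) + phi y (phi z x) + phi z (phi x y) = 0)"

definition linear_deformation_cochain :: "('v::real_vector \<Rightarrow> 'v \<Rightarrow> 'v) \<Rightarrow> ('v \<Rightarrow> 'v \<Rightarrow> 'v) \<Rightarrow> bool" where
  "linear_deformation_cochain br phi \<longleftrightarrow>
     bilinear_map phi \<and> skew phi \<and> adj_cocycle br phi \<and> integrable phi"

definition lie_isomorphic :: "('v::real_vector \<Rightarrow> 'v \<Rightarrow> 'v) \<Rightarrow> ('w::real_vector \<Rightarrow> 'w \<Rightarrow> 'w) \<Rightarrow> bool" where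
  "lie_isomorphic b1 b2 \<longleftrightarrow> (\<exists>f. linear f \<and> bij f \<and> (\<forall>x y. f (b1 x y) = b2 (f x) (f y)))"

definition contraction :: "('v::real_normed_vector \<Rightarrow> 'v \<Rightarrow> 'v) \<Rightarrow> ('v \<Rightarrow> 'v \<Rightarrow> 'v) \<Rightarrow> bool" where
  "contraction b b' \<longleftrightarrow> (\<exists>Phi :: real \<Rightarrow> 'v \<Rightarrow> 'v.
      (\<forall>t\<ge>1. linear (Phi t) \<and> bij (Phi t)) \<and>
      (\<forall>x y. ((\<lambda>t. inv (Phi t) (b (Phi t x) (Phi t y))) \<longlongrightarrow> b' x y) at_top))"

end

theory Submission
  imports Defs
begin

(* The family itself is the deformation: gbr a is affine in a, so
   gbr a = gbr (-1) + (a + 1) (gbr 0 - gbr (-1)), and since every member of this pencil satisfies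
   the Jacobi identity, its direction is an integrable 2-cocycle.

   Against contractions we use the isomorphism invariant form
   K_c (u, v) = tr (ad u ad v) - c tr (ad u) tr (ad v).  For a \<noteq> -1 the choice
   c = gbr_twist a cancels the X_8 term of the Killing form of g_a, so K_c has
   rank 3 on g_a and hence on every bracket Phi_t^-1 [Phi_t -, Phi_t -].  Rank at most 3 means
   that all 4 x 4 Gram determinants vanish, a closed condition that survives the limit; but g_-1
   is unimodular (tr ad = 0) and its Killing form has rank 4.  For a = -1 a contraction
   isomorphic to g_-1 is trivial by definition. *)

definition pullback_bracket :: "('v \<Rightarrow> 'w) \<Rightarrow> ('w \<Rightarrow> 'w \<Rightarrow> 'w) \<Rightarrow> 'v \<Rightarrow> 'v \<Rightarrow> 'v" where
  "pullback_bracket f b x y = inv f (b (f x) (f y))"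

lemma lie_hom_eq_pullback_bracket:
  assumes "inj f" and "\<And>x y. f (b x y) = b' (f x) (f y)"
  shows "b = pullback_bracket f b'"
  using assms by (intro ext) (metis inv_f_f pullback_bracket_def)

lemma bij_linear_imp_inv_linear:
  fixes f :: "'v::real_vector \<Rightarrow> 'w::real_vector"
  assumes "linear f" and "bij f"
  shows "linear (inv f)"
proof (rule linearI)
  have inj: "inj f" and f_inv: "\<And>y. f (inv f y) = y"
    using assms(2) by (simp_all add: bij_is_inj bij_is_surj surj_f_inv_f)
  show "inv f (x + y) = inv f x + inv f y" for x y
    using inj f_inv linear_add[OF assms(1)] by (metis inv_f_f)
  show "inv f (c *\<^sub>R x) = c *\<^sub>R inv f x" for c x
    using inj f_inv linear_scale[OF assms(1)] by (metis inv_f_f)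
qed

lemma lie_isomorphic_sym:
  fixes b :: "'v::real_vector \<Rightarrow> 'v \<Rightarrow> 'v" and b' :: "'w::real_vector \<Rightarrow> 'w \<Rightarrow> 'w"
  assumes "lie_isomorphic b b'"
  shows "lie_isomorphic b' b"
proof -
  obtain f where lin: "linear f" and bij: "bij f" and hom: "\<And>x y. f (b x y) = b' (f x) (f y)"
    using assms unfolding lie_isomorphic_def by blast
  have "inv f (b' x y) = b (inv f x) (inv f y)" for x y
    using bij hom by (metis bij_inv_eq_iff)
  moreover have "linear (inv f)"
    using lin bij by (rule bij_linear_imp_inv_linear)
  ultimately show ?thesis
    using bij bij_imp_bij_inv unfolding lie_isomorphic_def by blast
qed

lemma linear_deformation_cochain_of_pencil:
  assumes b: "bilinear_map b" "skew b" and phi: "bilinear_map phi" "skew phi"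
    and jac: "\<And>t. jacobi (\<lambda>x y. b x y + t *\<^sub>R phi x y)"
  shows "linear_deformation_cochain b phi"
proof -
  have lin: "\<And>u. linear (b u)" "\<And>u. linear (phi u)"
    using b(1) phi(1) unfolding bilinear_map_def by blast+
  have skew_b: "\<And>x y. b x y = - b y x" and skew_phi: "\<And>x y. phi x y = - phi y x"
    using b(2) phi(2) unfolding skew_def by blast+
  have "adj_cocycle b phi \<and> integrable phi" unfolding adj_cocycle_def integrable_def
  proof (intro conjI allI)
    fix x y z
    define A where "A = b x (b y z) + b y (b z x) + b z (b x y)"
    define C where "C = b x (phi y z) + b y (phi z x) + b z (phi x y)
                        + phi x (b y z) + phi y (b z x) + phi z (b x y)"
    define I where "I = phi x (phi y z) + phi y (phi z x) + phi z (phi x y)"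
    have expand: "A + t *\<^sub>R C + (t * t) *\<^sub>R I = 0" for t
      using jac[of t] unfolding jacobi_def A_def C_def I_def
      by (simp add: lin linear_add linear_scale algebra_simps)
    have "A = 0" using expand[of 0] by simp
    then have CI: "C + I = 0" "I - C = 0"
      using expand[of 1] expand[of "-1"] by (simp_all add: algebra_simps)
    have "2 *\<^sub>R I = (C + I) + (I - C)" by (simp add: scaleR_2)
    with CI have I0: "I = 0" by simp
    with CI have C0: "C = 0" by simp
    have swap: "phi (b x z) y = phi y (b z x)"
      using skew_phi[of "b x z" y] skew_b[of x z] linear_neg[OF lin(2)] by simp
    show "I = 0" by (rule I0)
    show "b x (phi y z) - b y (phi x z) + b z (phi x y)
          - phi (b x y) z + phi (b x z) y - phi (b y z) x = 0"
      using C0 unfolding C_def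
      by (simp add: skew_phi[of x z] skew_phi[of "b x y" z] skew_phi[of "b y z" x]
          swap lin linear_neg algebra_simps)
  qed
  then show ?thesis
    using phi unfolding linear_deformation_cochain_def by blast
qed

definition ad_trace :: "(real^'n \<Rightarrow> real^'n \<Rightarrow> real^'n) \<Rightarrow> real^'n \<Rightarrow> real" where
  "ad_trace b u = trace (matrix (b u))"

definition killing_form :: "(real^'n \<Rightarrow> real^'n \<Rightarrow> real^'n) \<Rightarrow> real^'n \<Rightarrow> real^'n \<Rightarrow> real" where
  "killing_form b u v = trace (matrix (b u) ** matrix (b v))"

definition twisted_killing_form ::
    "real \<Rightarrow> (real^'n \<Rightarrow> real^'n \<Rightarrow> real^'n) \<Rightarrow> real^'n \<Rightarrow> real^'n \<Rightarrow> real" where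
  "twisted_killing_form c b u v = killing_form b u v - c * ad_trace b u * ad_trace b v"

lemma matrix_mul_matrix_inv:
  fixes f :: "real^'n \<Rightarrow> real^'n"
  assumes "linear f" and "bij f"
  shows "matrix f ** matrix (inv f) = mat 1"
proof -
  have "f \<circ> inv f = id"
    using assms(2) by (metis bij_is_surj surj_iff)
  then show ?thesis
    using assms by (metis bij_linear_imp_inv_linear matrix_compose matrix_id_mat_1)
qed

lemma matrix_pullback_bracket:
  fixes f :: "real^'n \<Rightarrow> real^'n"
  assumes "linear f" and "bij f" and "linear (b (f u))"
  shows "matrix (pullback_bracket f b u) = matrix (inv f) ** matrix (b (f u)) ** matrix f"
proof -
  have "pullback_bracket f b u = inv f \<circ> b (f u) \<circ> f"
    by (auto simp: pullback_bracket_def)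
  moreover have "linear (inv f)"
    using assms(1,2) by (rule bij_linear_imp_inv_linear)
  ultimately show ?thesis
    using assms by (simp add: matrix_compose linear_compose)
qed

lemma ad_trace_pullback_bracket:
  fixes f :: "real^'n \<Rightarrow> real^'n"
  assumes "linear f" and "bij f" and "linear (b (f u))"
  shows "ad_trace (pullback_bracket f b) u = ad_trace b (f u)"
proof -
  have "ad_trace (pullback_bracket f b) u
      = trace (matrix f ** matrix (inv f) ** matrix (b (f u)))"
    using assms by (simp add: ad_trace_def matrix_pullback_bracket trace_mul_sym[of _ "matrix f"]
        matrix_mul_assoc)
  then show ?thesis
    using assms by (simp add: ad_trace_def matrix_mul_matrix_inv)
qed

lemma killing_form_pullback_bracket:
  fixes f :: "real^'n \<Rightarrow> real^'n"
  assumes "linear f" and "bij f" and "linear (b (f u))" and "linear (b (f v))"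
  shows "killing_form (pullback_bracket f b) u v = killing_form b (f u) (f v)"
proof -
  have cancel: "matrix f ** (matrix (inv f) ** M) = M" for M :: "real^'n^'n"
    using assms(1,2) by (metis matrix_mul_assoc matrix_mul_lid matrix_mul_matrix_inv)
  have "killing_form (pullback_bracket f b) u v
      = trace (matrix f ** (matrix (inv f) ** (matrix (b (f u)) **
          (matrix f ** (matrix (inv f) ** matrix (b (f v)))))))"
    using assms by (simp add: killing_form_def matrix_pullback_bracket
        trace_mul_sym[of _ "matrix f"] matrix_mul_assoc)
  then show ?thesis
    by (simp add: killing_form_def cancel)
qed

lemma twisted_killing_form_pullback_bracket:
  fixes f :: "real^'n \<Rightarrow> real^'n"
  assumes "linear f" and "bij f" and "\<And>u. linear (b u)"
  shows "twisted_killing_form c (pullback_bracket f b) u v = twisted_killing_form c b (f u) (f v)"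
  using assms
  by (simp add: twisted_killing_form_def killing_form_pullback_bracket ad_trace_pullback_bracket)

lemma twisted_killing_form_tendsto:
  fixes F :: "'a \<Rightarrow> real^'n \<Rightarrow> real^'n \<Rightarrow> real^'n"
  assumes "\<And>x y. ((\<lambda>t. F t x y) \<longlongrightarrow> b x y) net"
  shows "((\<lambda>t. twisted_killing_form c (F t) u v) \<longlongrightarrow> twisted_killing_form c b u v) net"
  unfolding twisted_killing_form_def killing_form_def ad_trace_def trace_def
    matrix_matrix_mult_def matrix_def
  by (simp, intro tendsto_intros assms)

definition gram :: "('v \<Rightarrow> 'v \<Rightarrow> real) \<Rightarrow> ('k \<Rightarrow> 'v) \<Rightarrow> real^'k^'k" where
  "gram B w = (\<chi> i j. B (w i) (w j))"

lemma det_gram_tendsto: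
  fixes w :: "'k::finite \<Rightarrow> 'v"
  assumes "\<And>x y. ((\<lambda>t. B t x y) \<longlongrightarrow> B' x y) net"
  shows "((\<lambda>t. det (gram (B t) w)) \<longlongrightarrow> det (gram B' w)) net"
  unfolding det_def gram_def by (simp, intro tendsto_intros assms)

lemma det_gram_eq_0_if_factors:
  fixes l r :: "'v \<Rightarrow> real^'m" and w :: "'k::finite \<Rightarrow> 'v"
  assumes "\<And>x y. B x y = l x \<bullet> r y" and "CARD('m) < CARD('k)"
  shows "det (gram B w) = 0"
proof -
  define L :: "real^'m^'k" where "L = (\<chi> i. l (w i))"
  define R :: "real^'m^'k" where "R = (\<chi> i. r (w i))"
  have "gram B w = L ** transpose R"
    by (simp add: gram_def assms(1) L_def R_def vec_eq_iff matrix_matrix_mult_def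
        transpose_def inner_vec_def)
  moreover have "rank (L ** transpose R) \<le> CARD('m)"
    using rank_mul_le_left[of L "transpose R"] rank_bound[of L] by (meson le_trans min.boundedE)
  ultimately show ?thesis
    using assms(2) by (simp add: det_eq_0_rank)
qed

lemma det_gram_twisted_killing_form_contraction:
  fixes b b' :: "real^'n \<Rightarrow> real^'n \<Rightarrow> real^'n" and w :: "'k::finite \<Rightarrow> real^'n"
  assumes "contraction b b'" and "\<And>u. linear (b u)"
    and degenerate: "\<And>v :: 'k \<Rightarrow> real^'n. det (gram (twisted_killing_form c b) v) = 0"
  shows "det (gram (twisted_killing_form c b') w) = 0"
proof -
  obtain Phi :: "real \<Rightarrow> real^'n \<Rightarrow> real^'n"
    where iso: "\<And>t. t \<ge> 1 \<Longrightarrow> linear (Phi t) \<and> bij (Phi t)"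
      and lim: "\<And>x y. ((\<lambda>t. pullback_bracket (Phi t) b x y) \<longlongrightarrow> b' x y) at_top"
    using assms(1) unfolding contraction_def pullback_bracket_def by blast
  have "((\<lambda>t. det (gram (twisted_killing_form c (pullback_bracket (Phi t) b)) w))
          \<longlongrightarrow> det (gram (twisted_killing_form c b') w)) at_top"
    by (intro det_gram_tendsto twisted_killing_form_tendsto lim)
  moreover have "\<forall>\<^sub>F t in at_top.
      det (gram (twisted_killing_form c (pullback_bracket (Phi t) b)) w) = 0"
  proof (rule eventually_at_top_linorderI)
    fix t :: real assume "t \<ge> 1"
    then have "gram (twisted_killing_form c (pullback_bracket (Phi t) b)) w
             = gram (twisted_killing_form c b) (Phi t \<circ> w)"
      using iso assms(2) by (simp add: gram_def twisted_killing_form_pullback_bracket)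
    then show "det (gram (twisted_killing_form c (pullback_bracket (Phi t) b)) w) = 0"
      by (simp add: degenerate)
  qed
  ultimately show ?thesis
    by (metis tendsto_eventually tendsto_unique trivial_limit_at_top_linorder)
qed

lemma exhaust_8:
  fixes i :: 8
  shows "i = 1 \<or> i = 2 \<or> i = 3 \<or> i = 4 \<or> i = 5 \<or> i = 6 \<or> i = 7 \<or> i = 8"
proof (induct i)
  case (of_int z)
  then have "z = 0 \<or> z = 1 \<or> z = 2 \<or> z = 3 \<or> z = 4 \<or> z = 5 \<or> z = 6 \<or> z = 7" by fastforce
  then show ?case by auto
qed

lemma forall_8: "(\<forall>i::8. P i) \<longleftrightarrow> P 1 \<and> P 2 \<and> P 3 \<and> P 4 \<and> P 5 \<and> P 6 \<and> P 7 \<and> P 8"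
  by (metis exhaust_8)

lemma sum_8: "sum f (UNIV::8 set) = f 1 + f 2 + f 3 + f 4 + f 5 + f 6 + f 7 + f 8"
proof -
  have "(UNIV::8 set) = {1,2,3,4,5,6,7,8}"
    using exhaust_8 by auto
  then show ?thesis
    unfolding \<open>UNIV = _\<close> by (simp add: ac_simps)
qed

lemma gbr_component:
  "gbr a x y $ 1 = x$2 * y$3 - x$3 * y$2"
  "gbr a x y $ 2 = 2 * (x$1 * y$2 - x$2 * y$1)"
  "gbr a x y $ 3 = -2 * (x$1 * y$3 - x$3 * y$1)"
  "gbr a x y $ 4 = (x$1 * y$4 - x$4 * y$1) + (x$2 * y$5 - x$5 * y$2) + (x$4 * y$8 - x$8 * y$4)"
  "gbr a x y $ 5 = -(x$1 * y$5 - x$5 * y$1) + (x$3 * y$4 - x$4 * y$3) + (x$5 * y$8 - x$8 * y$5)"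
  "gbr a x y $ 6 = (x$1 * y$6 - x$6 * y$1) + (x$2 * y$7 - x$7 * y$2) + a * (x$6 * y$8 - x$8 * y$6)"
  "gbr a x y $ 7 = -(x$1 * y$7 - x$7 * y$1) + (x$3 * y$6 - x$6 * y$3) + a * (x$7 * y$8 - x$8 * y$7)"
  "gbr a x y $ 8 = 0"
  unfolding gbr_def
  by (simp_all add: sum.atLeastAtMost_shift_bounds numeral_eq_Suc br_basis_def br_upper_def
      X_def coord_def axis_def algebra_simps)

lemma bilinear_map_gbr: "bilinear_map (gbr a)"
  unfolding bilinear_map_def
  by (intro conjI allI linearI) (simp_all add: vec_eq_iff forall_8 gbr_component algebra_simps)

lemma skew_gbr: "skew (gbr a)"
  unfolding skew_def by (simp add: vec_eq_iff forall_8 gbr_component algebra_simps)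

lemma jacobi_gbr: "jacobi (gbr a)"
  unfolding jacobi_def by (simp add: vec_eq_iff forall_8 gbr_component algebra_simps)

lemma gbr_pencil: "gbr (-1) x y + t *\<^sub>R (gbr 0 x y - gbr (-1) x y) = gbr (t - 1) x y"
  by (simp add: vec_eq_iff forall_8 gbr_component algebra_simps)

lemma linear_deformation_cochain_gbr:
  "linear_deformation_cochain (gbr (-1)) (\<lambda>x y. gbr 0 x y - gbr (-1) x y)"
proof (rule linear_deformation_cochain_of_pencil)
  show "bilinear_map (\<lambda>x y. gbr 0 x y - gbr (-1) x y)"
    unfolding bilinear_map_def
    by (intro conjI allI linearI) (simp_all add: vec_eq_iff forall_8 gbr_component algebra_simps)
  show "skew (\<lambda>x y. gbr 0 x y - gbr (-1) x y)"
    using skew_gbr unfolding skew_def by (metis minus_diff_minus)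
qed (simp_all add: bilinear_map_gbr skew_gbr gbr_pencil jacobi_gbr)

lemma ad_trace_gbr: "ad_trace (gbr a) x = -2 * (1 + a) * x$8"
  by (simp add: ad_trace_def trace_def matrix_def sum_8 gbr_component axis_def algebra_simps)

lemma killing_form_gbr:
  "killing_form (gbr a) x y = 12 * x$1 * y$1 + 6 * (x$2 * y$3 + x$3 * y$2) + 2 * (1 + a\<^sup>2) * x$8 * y$8"
  by (simp add: killing_form_def trace_def matrix_matrix_mult_def matrix_def sum_8 gbr_component
      axis_def algebra_simps power2_eq_square)

definition gbr_twist :: "real \<Rightarrow> real" where
  "gbr_twist a = (1 + a\<^sup>2) / (2 * (1 + a)\<^sup>2)"

lemma twisted_killing_form_gbr:
  assumes "a \<noteq> -1"
  shows "twisted_killing_form (gbr_twist a) (gbr a) x y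
           = 12 * x$1 * y$1 + 6 * (x$2 * y$3 + x$3 * y$2)"
proof -
  have "(1 + a)\<^sup>2 \<noteq> 0" using assms by simp
  then have twist: "gbr_twist a * (4 * (1 + a)\<^sup>2) = 2 * (1 + a\<^sup>2)"
    by (simp add: gbr_twist_def)
  have "gbr_twist a * ad_trace (gbr a) x * ad_trace (gbr a) y
      = gbr_twist a * (4 * (1 + a)\<^sup>2) * x$8 * y$8"
    by (simp add: ad_trace_gbr power2_eq_square algebra_simps)
  also have "\<dots> = 2 * (1 + a\<^sup>2) * x$8 * y$8"
    by (simp only: twist)
  finally show ?thesis
    unfolding twisted_killing_form_def killing_form_gbr by simp
qed

lemma det_gram_twisted_killing_form_gbr:
  fixes w :: "4 \<Rightarrow> real^8"
  assumes "a \<noteq> -1"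
  shows "det (gram (twisted_killing_form (gbr_twist a) (gbr a)) w) = 0"
proof (rule det_gram_eq_0_if_factors)
  show "twisted_killing_form (gbr_twist a) (gbr a) x y
          = (vector [x$1, x$2, x$3] :: real^3) \<bullet> vector [12 * y$1, 6 * y$3, 6 * y$2]" for x y
    using assms by (simp add: twisted_killing_form_gbr inner_vec_def sum_3 algebra_simps)
qed simp

lemma det_gram_twisted_killing_form_gbr_minus_one:
  "\<exists>z :: 4 \<Rightarrow> real^8. det (gram (twisted_killing_form c (gbr (-1))) z) \<noteq> 0"
proof
  define z :: "4 \<Rightarrow> real^8" where
    "z i = (if i = 1 then axis 1 1 else if i = 2 then axis 2 1 + axis 3 1
            else if i = 3 then axis 2 1 - axis 3 1 else axis 8 1)" for i
  have form: "twisted_killing_form c (gbr (-1)) x y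
      = 12 * x$1 * y$1 + 6 * (x$2 * y$3 + x$3 * y$2) + 4 * x$8 * y$8" for x y
    by (simp add: twisted_killing_form_def killing_form_gbr ad_trace_gbr)
  have "(z 1)$1 = 1" "(z 1)$2 = 0" "(z 1)$3 = 0" "(z 1)$8 = 0"
       "(z 2)$1 = 0" "(z 2)$2 = 1" "(z 2)$3 = 1" "(z 2)$8 = 0"
       "(z 3)$1 = 0" "(z 3)$2 = 1" "(z 3)$3 = -1" "(z 3)$8 = 0"
       "(z 4)$1 = 0" "(z 4)$2 = 0" "(z 4)$3 = 0" "(z 4)$8 = 1"
    by (simp_all add: z_def axis_def)
  then have "gram (twisted_killing_form c (gbr (-1))) z
      = (\<chi> i j. if i = j then (if i = 3 then -12 else if i = 4 then 4 else 12) else 0)"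
    unfolding vec_eq_iff forall_4 by (simp add: gram_def form)
  then have "det (gram (twisted_killing_form c (gbr (-1))) z)
      = (\<Prod>i::4\<in>UNIV. if i = 3 then -12 else if i = 4 then 4 else 12)"
    by (subst det_diagonal) simp_all
  also have "\<dots> = 12 * 12 * (-12) * 4"
    unfolding UNIV_4 by simp
  finally show "det (gram (twisted_killing_form c (gbr (-1))) z) \<noteq> 0"
    by simp
qed

lemma not_contraction_onto_gbr_minus_one:
  assumes "a \<noteq> -1" and "contraction (gbr a) b'"
  shows "\<not> lie_isomorphic b' (gbr (-1))"
proof
  assume "lie_isomorphic b' (gbr (-1))"
  then obtain f where lin: "linear f" and bij: "bij f"
    and hom: "\<And>x y. f (b' x y) = gbr (-1) (f x) (f y)"
    unfolding lie_isomorphic_def by blast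
  let ?K = "twisted_killing_form (gbr_twist a)"
  obtain z :: "4 \<Rightarrow> real^8" where nondegenerate: "det (gram (?K (gbr (-1))) z) \<noteq> 0"
    using det_gram_twisted_killing_form_gbr_minus_one by blast
  have lin_gbr: "\<And>u. linear (gbr (-1) u)"
    using bilinear_map_gbr unfolding bilinear_map_def by blast
  have "b' = pullback_bracket f (gbr (-1))"
    using bij hom by (simp add: bij_is_inj lie_hom_eq_pullback_bracket)
  then have "gram (?K b') (inv f \<circ> z) = gram (?K (gbr (-1))) z"
    using lin bij lin_gbr
    by (simp add: gram_def twisted_killing_form_pullback_bracket bij_is_surj surj_f_inv_f)
  moreover have "det (gram (?K b') (inv f \<circ> z)) = 0"
    using bilinear_map_gbr det_gram_twisted_killing_form_gbr[OF assms(1)]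
    unfolding bilinear_map_def
    by (intro det_gram_twisted_killing_form_contraction[OF assms(2)]) blast+
  ultimately show False
    using nondegenerate by simp
qed

theorem corollary1:
  shows "(\<forall>a::real. -1 \<le> a \<and> a \<le> 1 \<longrightarrow>
            (\<exists>phi t. linear_deformation_cochain (gbr (-1)) phi \<and>
                     lie_isomorphic (\<lambda>x y. gbr (-1) x y + t *\<^sub>R phi x y) (gbr a)))
       \<and> (\<forall>a::real. -1 \<le> a \<and> a \<le> 1 \<longrightarrow>
            \<not> (\<exists>b'. contraction (gbr a) b' \<and> lie_isomorphic b' (gbr (-1))
                    \<and> \<not> lie_isomorphic (gbr a) b'))"
proof (intro conjI allI impI)
  fix a :: real
  have "lie_isomorphic (\<lambda>x y. gbr (-1) x y + (a + 1) *\<^sub>R (gbr 0 x y - gbr (-1) x y)) (gbr a)"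
    unfolding gbr_pencil lie_isomorphic_def by (intro exI[of _ id]) (simp add: linear_id)
  then show "\<exists>phi t. linear_deformation_cochain (gbr (-1)) phi \<and>
               lie_isomorphic (\<lambda>x y. gbr (-1) x y + t *\<^sub>R phi x y) (gbr a)"
    using linear_deformation_cochain_gbr by blast
next
  fix a :: real
  show "\<not> (\<exists>b'. contraction (gbr a) b' \<and> lie_isomorphic b' (gbr (-1))
                 \<and> \<not> lie_isomorphic (gbr a) b')"
  proof (cases "a = -1")
    case True
    then show ?thesis using lie_isomorphic_sym by blast
  next
    case False
    then show ?thesis using not_contraction_onto_gbr_minus_one by blast
  qed
qed

end
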